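(* Let $N\ge3$ and let $Q$ be a non-degenerate hermitian form on $\mathbb{C}^N$. The only additive subgroups of $\mathbb{C}^N$ invariant under the special unitary group $SU(Q)$ are $\{0\}$ and $\mathbb{C}^N$. *)

theory Defs
  imports "HOL-Analysis.Analysis"
begin

definition hermitian_form :: "(complex^'n \<Rightarrow> complex^'n \<Rightarrow> complex) \<Rightarrow> bool" where
  "hermitian_form Q \<longleftrightarrow>
     (\<forall>x y z. Q x (y + z) = Q x y + Q x z) \<and>
     (\<forall>x y (c::complex). Q x (c *s y) = c * Q x y) \<and>
     (\<forall>x y. Q y x = cnj (Q x y))"

definition nondegenerate_form :: "(complex^'n \<Rightarrow> complex^'n \<Rightarrow> complex) \<Rightarrow> bool" where
  "nondegenerate_form Q \<longleftrightarrow> (\<forall>x. (\<forall>y. Q x y = 0) \<longrightarrow> x = 0)"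

definition SU_form :: "(complex^'n \<Rightarrow> complex^'n \<Rightarrow> complex) \<Rightarrow> (complex^'n^'n) set" where
  "SU_form Q = {A. det A = 1 \<and> (\<forall>x y. Q (A *v x) (A *v y) = Q x y)}"

definition additive_subgroup :: "(complex^'n) set \<Rightarrow> bool" where
  "additive_subgroup G \<longleftrightarrow> 0 \<in> G \<and> (\<forall>x\<in>G. \<forall>y\<in>G. x + y \<in> G) \<and> (\<forall>x\<in>G. - x \<in> G)"

end

theory Submission
  imports Defs "HOL-Computational_Algebra.Polynomial"
begin

(* For an anisotropic vector u (Q u u \<noteq> 0) and a unit scalar l, the complex reflection
   x \<mapsto> x + ((l - 1) Q(u, x) / Q(u, u)) u preserves Q and has determinant l, so composing the
   reflections in two orthogonal anisotropic vectors with eigenvalues l and cnj l gives an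
   element A of SU(Q), and A x - x \<in> G for x \<in> G. Doing this twice, with u, w, v pairwise
   orthogonal and anisotropic (this needs N \<ge> 3), isolates (m - 1) (l - 1) (Q(u, x) / Q(u, u)) u \<in> G
   for all unit scalars l, m. These scalars generate \<complex> additively, so G contains the whole
   line through every anisotropic u with Q(u, x) \<noteq> 0. Finally, for x \<noteq> 0 every vector y is the
   difference of y + n a and n a, where a and y + n a are anisotropic and not orthogonal to x
   for a suitable natural number n, since only finitely many n fail. *)

lemma scalar_product_add_right: "scalar_product b (x + y) = scalar_product b x + scalar_product b y"
  by (simp add: scalar_product_def distrib_left sum.distrib)

lemma scalar_product_scale_right:
  "scalar_product (b :: 'a::comm_semiring_1^'n) (c *s y) = c * scalar_product b y"
  by (simp add: scalar_product_def sum_distrib_left mult.left_commute)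

lemma scalar_product_diff_right:
  "scalar_product (b :: 'a::comm_ring_1^'n) (x - y) = scalar_product b x - scalar_product b y"
  by (simp add: scalar_product_def right_diff_distrib sum_subtractf)

lemma scalar_product_add_left: "scalar_product (x + y) b = scalar_product x b + scalar_product y b"
  by (simp add: scalar_product_def distrib_right sum.distrib)

lemma scalar_product_scale_left: "scalar_product (c *s y) b = c * scalar_product y b"
  by (simp add: scalar_product_def sum_distrib_left mult.assoc)

lemma scalar_product_diff_left:
  "scalar_product (x - y :: 'a::comm_ring_1^'n) b = scalar_product x b - scalar_product y b"
  by (simp add: scalar_product_def left_diff_distrib sum_subtractf)

lemma scalar_product_axis_right: "scalar_product b (axis k 1) = b $ k"
  by (simp add: scalar_product_def axis_def sum.remove [where x=k])

lemma scalar_product_axis_left: "scalar_product (axis k 1) b = b $ k"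
  by (simp add: scalar_product_def axis_def sum.remove [where x=k])

lemma matrix_vector_mult_component: "(A *v x) $ i = scalar_product (A $ i) x"
  by (simp add: matrix_vector_mult_def scalar_product_def)

lemma basis_expansion_remove:
  "v $ k *s axis k 1 + (\<Sum>j\<in>UNIV - {k}. v $ j *s axis j 1) = (v :: 'a::ring_1^'n)"
proof -
  have "(\<Sum>j\<in>UNIV. v $ j *s axis j 1) = v $ k *s axis k 1 + (\<Sum>j\<in>UNIV - {k}. v $ j *s axis j 1)"
    by (rule sum.remove) simp_all
  then show ?thesis
    unfolding basis_expansion by (rule sym)
qed

lemma det_identity_replace_row:
  fixes r :: "'a::field^'n"
  shows "det (\<chi> i. if i = k then r else axis i 1) = r $ k"
proof -
  define D :: "'a^'n^'n" where "D = (\<chi> i. if i = k then r $ k *s axis k 1 else axis i 1)"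
  have rows: "row j D = (if j = k then r $ k *s axis k 1 else axis j 1)" for j
    by (simp add: D_def row_def vec_eq_iff)
  have "(\<Sum>j\<in>UNIV - {k}. r $ j *s axis j 1) \<in> vec.span {row j D | j. j \<noteq> k}"
    by (intro vec.span_sum vec.span_scale vec.span_base) (auto simp: rows)
  then have "det (\<chi> i. if i = k then row k D + (\<Sum>j\<in>UNIV - {k}. r $ j *s axis j 1) else row i D)
      = det D"
    by (rule det_row_span)
  moreover have "(\<chi> i. if i = k then row k D + (\<Sum>j\<in>UNIV - {k}. r $ j *s axis j 1) else row i D)
      = (\<chi> i. if i = k then r else axis i 1)"
    using basis_expansion_remove[of r k] by (auto simp: rows intro!: Cart_lambda_cong)
  moreover have "det D = (\<Prod>i\<in>UNIV. D $ i $ i)"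
    by (rule det_diagonal) (auto simp: D_def axis_def)
  moreover have "(\<Prod>i\<in>UNIV. D $ i $ i) = (\<Prod>i\<in>UNIV. if i = k then r $ k else 1)"
    by (rule prod.cong) (auto simp: D_def axis_def)
  ultimately show ?thesis by (simp add: prod.delta)
qed

definition rank_one_update :: "'a::comm_ring_1^'n \<Rightarrow> 'a^'n \<Rightarrow> 'a^'n^'n" where
  "rank_one_update a b = (\<chi> i. axis i 1 + a $ i *s b)"

lemma rank_one_update_mult_vec: "rank_one_update a b *v x = x + scalar_product b x *s a"
  by (simp add: vec_eq_iff matrix_vector_mult_component rank_one_update_def
      scalar_product_add_left scalar_product_scale_left scalar_product_axis_left mult.commute)

lemma det_rank_one_update:
  fixes a b :: "'a::field^'n"
  shows "det (rank_one_update a b) = 1 + scalar_product b a"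
proof (cases "a = 0")
  case True
  then have "rank_one_update a b = mat 1"
    by (simp add: rank_one_update_def mat_def vec_eq_iff axis_def)
  with True show ?thesis by (simp add: scalar_product_def)
next
  case False
  then obtain k where ak: "a $ k \<noteq> 0" by (metis vec_eq_iff zero_index)
  define s where "s = scalar_product b a"
  define M :: "'a^'n^'n" where "M = (\<chi> i. if i = k then a else axis i 1)"
  define P where "P = transpose M"
  define N :: "'a^'n^'n" where
    "N = (\<chi> i. if i = k then b + (1 + s - b $ k) *s axis k 1 else axis i 1)"
  have P_mult: "P *v x = x + x $ k *s (a - axis k 1)" for x
  proof -
    have "P *v x = x $ k *s a + (\<Sum>j\<in>UNIV - {k}. x $ j *s axis j 1)"
      by (simp add: P_def vec_eq_iff vector_matrix_mult_def M_def sum_component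
          sum.remove[of UNIV k])
    then show ?thesis
      using basis_expansion_remove[of x k] by (simp add: algebra_simps)
  qed
  have N_mult: "N *v x = x + (scalar_product b x + (s - b $ k) * x $ k) *s axis k 1" for x
  proof -
    have "(N *v x) $ i = (x + (scalar_product b x + (s - b $ k) * x $ k) *s axis k 1) $ i" for i
      by (cases "i = k")
        (simp_all add: N_def matrix_vector_mult_component scalar_product_add_left
          scalar_product_scale_left scalar_product_diff_left scalar_product_axis_left,
         simp_all add: axis_def algebra_simps)
    then show ?thesis by (simp add: vec_eq_iff)
  qed
  (* P has k-th column a; conjugation by P turns the update into the identity with one row
     replaced *)
  have "rank_one_update a b ** P = P ** N"
  proof (subst matrix_eq, intro allI)
    fix x
    define c where "c = scalar_product b x + (s - b $ k) * x $ k"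
    have "scalar_product b (P *v x) = c"
      by (simp add: P_mult c_def s_def scalar_product_add_right scalar_product_scale_right
          scalar_product_diff_right scalar_product_axis_right algebra_simps)
    then have "(rank_one_update a b ** P) *v x = x + x $ k *s (a - axis k 1) + c *s a"
      by (simp add: matrix_vector_mul_assoc[symmetric] rank_one_update_mult_vec P_mult)
    also have "\<dots> = (P ** N) *v x"
      by (simp add: matrix_vector_mul_assoc[symmetric] P_mult N_mult c_def
          vec_eq_iff algebra_simps)
    finally show "(rank_one_update a b ** P) *v x = (P ** N) *v x" .
  qed
  then have "det (rank_one_update a b) * det P = det P * det N"
    unfolding det_mul[symmetric] by (rule arg_cong)
  moreover have "det P = a $ k"
    by (simp add: P_def M_def det_identity_replace_row)
  moreover have "det N = 1 + s"
    unfolding N_def det_identity_replace_row by simp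
  ultimately have "det (rank_one_update a b) * a $ k = (1 + s) * a $ k"
    by (metis mult.commute)
  with ak show ?thesis
    unfolding s_def by simp
qed

lemma additive_subgroup_diff:
  assumes "additive_subgroup G" "x \<in> G" "y \<in> G"
  shows "x - y \<in> G"
  using assms unfolding additive_subgroup_def by (metis diff_conv_add_uminus)

lemma additive_subgroup_of_nat_scale:
  assumes G: "additive_subgroup G" and x: "x \<in> G"
  shows "of_nat n *s x \<in> G"
proof (induction n)
  case 0
  with G show ?case by (simp add: additive_subgroup_def)
next
  case (Suc n)
  have "of_nat (Suc n) *s x = of_nat n *s x + x"
    by (simp add: vec_eq_iff algebra_simps)
  with Suc G x show ?case by (simp add: additive_subgroup_def)
qed

lemma unit_circle_difference:
  assumes "cmod d \<le> 2"
  obtains a b where "cmod a = 1" "cmod b = 1" "d = b - a"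
proof (cases "d = 0")
  case True
  then show ?thesis by (intro that[of 1 1]) simp_all
next
  case False
  define e where "e = d / cmod d"
  define r where "r = cmod d / 2"
  define s where "s = sqrt (1 - r\<^sup>2)"
  (* d = 2 r e is the chord between the unit vectors e (\<plusminus>r + i s) *)
  have "0 \<le> r" "r \<le> 1"
    using assms by (auto simp: r_def)
  then have "s\<^sup>2 = 1 - r\<^sup>2"
    by (simp add: s_def power_le_one)
  then have "cmod (Complex r s) = 1" "cmod (Complex (- r) s) = 1"
    by (simp_all add: cmod_def)
  moreover have "cmod e = 1"
    using False by (simp add: e_def norm_divide)
  moreover have "e * Complex r s - e * Complex (- r) s = d"
    using False by (simp add: e_def r_def complex_eq_iff field_simps)
  ultimately show ?thesis
    by (intro that[of "e * Complex (- r) s" "e * Complex r s"]) (simp_all add: norm_mult)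
qed

lemma additive_subgroup_line_from_unit_products:
  assumes G: "additive_subgroup G"
    and unit_products: "\<And>l m. cmod l = 1 \<Longrightarrow> cmod m = 1 \<Longrightarrow> ((m - 1) * (l - 1)) *s p \<in> G"
  shows "c *s p \<in> G"
proof -
  have small: "e *s p \<in> G" if "cmod e \<le> 4" for e
  proof -
    have "cmod (e / 2) \<le> 2"
      using that by (simp add: norm_divide)
    then obtain a b where ab: "cmod a = 1" "cmod b = 1" "e / 2 = b - a"
      by (rule unit_circle_difference)
    have diff_in: "((-1 - 1) * (a - 1)) *s p - ((-1 - 1) * (b - 1)) *s p \<in> G"
      using ab unit_products[of a "-1"] unit_products[of b "-1"]
      by (intro additive_subgroup_diff[OF G]) (simp_all add: mult.commute)
    have e: "e = 2 * b - 2 * a"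
      using ab(3) by (simp add: field_simps)
    have "((-1 - 1) * (a - 1)) *s p - ((-1 - 1) * (b - 1)) *s p = e *s p"
      unfolding e by (simp add: vec_eq_iff algebra_simps)
    with diff_in show ?thesis
      by simp
  qed
  define n where "n = nat \<lceil>cmod c\<rceil> + 1"
  have n: "real n \<ge> 1" "cmod c \<le> real n"
    unfolding n_def using norm_ge_zero[of c] by linarith+
  then have "cmod (c / of_nat n) \<le> 4"
    by (simp add: norm_divide divide_le_eq)
  then have "of_nat n *s ((c / of_nat n) *s p) \<in> G"
    by (intro additive_subgroup_of_nat_scale[OF G] small)
  with n show ?thesis
    by (simp add: vector_smult_assoc)
qed

lemma poly_nonzero_at_some_nat:
  fixes p :: "'a::{idom, ring_char_0} poly"
  assumes "p \<noteq> 0"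
  obtains n :: nat where "poly p (of_nat n) \<noteq> 0"
proof -
  have "finite (of_nat -` {z. poly p z = 0} :: nat set)"
    using poly_roots_finite[OF assms] by (rule finite_vimageI) (simp add: inj_on_def)
  then obtain n :: nat where "n \<notin> of_nat -` {z. poly p z = 0}"
    using ex_new_if_finite[OF infinite_UNIV_nat] by blast
  then show ?thesis
    using that by simp
qed

locale hermitian_space =
  fixes Q :: "complex^'n \<Rightarrow> complex^'n \<Rightarrow> complex"
  assumes hermitian: "hermitian_form Q"
begin

lemma add_right: "Q x (y + z) = Q x y + Q x z"
  using hermitian unfolding hermitian_form_def by blast

lemma scale_right: "Q x (c *s y) = c * Q x y"
  using hermitian unfolding hermitian_form_def by blast

lemma conj_sym: "Q y x = cnj (Q x y)"
  using hermitian unfolding hermitian_form_def by blast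

lemma add_left: "Q (y + z) x = Q y x + Q z x"
  by (metis add_right conj_sym complex_cnj_add)

lemma scale_left: "Q (c *s y) x = cnj c * Q y x"
  by (metis scale_right conj_sym complex_cnj_mult)

lemma orthogonal_commute: "Q x y = 0 \<longleftrightarrow> Q y x = 0"
  by (metis conj_sym complex_cnj_zero)

lemma cnj_diag: "cnj (Q x x) = Q x x"
  by (metis conj_sym)

lemma zero_right [simp]: "Q x 0 = 0"
  using add_right[of x 0 0] by simp

lemma diff_right: "Q x (y - z) = Q x y - Q x z"
  using add_right[of x "y - z" z] by simp

lemma sum_right: "Q x (sum f S) = (\<Sum>i\<in>S. Q x (f i))"
  by (induction S rule: infinite_finite_induct) (auto simp: add_right)

lemma scalar_product_coordinates: "scalar_product (\<chi> j. c * Q u (axis j 1)) x = c * Q u x"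
proof -
  have "Q u x = (\<Sum>j\<in>UNIV. x $ j * Q u (axis j 1))"
    by (subst basis_expansion[symmetric]) (simp add: sum_right scale_right)
  then show ?thesis
    by (simp add: scalar_product_def sum_distrib_left ac_simps)
qed

definition reflection :: "complex^'n \<Rightarrow> complex \<Rightarrow> complex^'n^'n" where
  "reflection u l = rank_one_update u (\<chi> j. (l - 1) / Q u u * Q u (axis j 1))"

lemma reflection_mult_vec: "reflection u l *v x = x + ((l - 1) / Q u u * Q u x) *s u"
  unfolding reflection_def rank_one_update_mult_vec scalar_product_coordinates ..

lemma det_reflection:
  assumes "Q u u \<noteq> 0"
  shows "det (reflection u l) = l"
  using assms unfolding reflection_def det_rank_one_update scalar_product_coordinates by simp

lemma reflection_preserves:
  assumes u: "Q u u \<noteq> 0" and l: "cmod l = 1"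
  shows "Q (reflection u l *v x) (reflection u l *v y) = Q x y"
proof -
  define a where "a = (l - 1) / Q u u"
  have "a + cnj a + cnj a * a * Q u u = (cnj l * l - 1) / Q u u"
    using u cnj_diag[of u] by (simp add: a_def field_simps)
  also have "cnj l * l = 1"
    using l by (metis complex_norm_square mult.commute of_real_1 one_power2)
  finally have cancel: "a + cnj a + cnj a * a * Q u u = 0"
    by simp
  have "Q (reflection u l *v x) (reflection u l *v y)
      = Q x y + Q u y * cnj (Q u x) * (a + cnj a + cnj a * a * Q u u)"
    unfolding reflection_mult_vec a_def[symmetric]
    by (simp add: add_right add_left scale_right scale_left conj_sym[of x u] algebra_simps)
  with cancel show ?thesis
    by simp
qed

definition paired_reflection :: "complex^'n \<Rightarrow> complex^'n \<Rightarrow> complex \<Rightarrow> complex^'n^'n" where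
  "paired_reflection u w l = reflection u l ** reflection w (cnj l)"

lemma paired_reflection_in_SU:
  assumes "Q u u \<noteq> 0" "Q w w \<noteq> 0" "cmod l = 1"
  shows "paired_reflection u w l \<in> SU_form Q"
proof -
  have "det (paired_reflection u w l) = l * cnj l"
    using assms by (simp add: paired_reflection_def det_mul det_reflection)
  also have "\<dots> = 1"
    using assms(3) by (metis complex_norm_square of_real_1 one_power2)
  finally show ?thesis
    using assms
    by (simp add: SU_form_def paired_reflection_def reflection_preserves
        flip: matrix_vector_mul_assoc)
qed

lemma paired_reflection_mult_vec:
  assumes "Q u w = 0"
  shows "paired_reflection u w l *v x
    = x + ((l - 1) / Q u u * Q u x) *s u + ((cnj l - 1) / Q w w * Q w x) *s w"
  using assms
  by (simp add: paired_reflection_def reflection_mult_vec add_right scale_right algebra_simps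
      flip: matrix_vector_mul_assoc)

lemma isotropic_pair_combination:
  assumes "Q w0 w0 = 0" "Q w1 w1 = 0" "Q w0 w1 \<noteq> 0"
  shows "Q (w0 + cnj (Q w0 w1) *s w1) (w0 + cnj (Q w0 w1) *s w1) \<noteq> 0"
proof -
  have "Q (w0 + cnj (Q w0 w1) *s w1) (w0 + cnj (Q w0 w1) *s w1) = 2 * (cnj (Q w0 w1) * Q w0 w1)"
    using assms(1,2) conj_sym[of w1 w0]
    by (simp add: add_left add_right scale_left scale_right algebra_simps)
  with assms(3) show ?thesis
    by simp
qed

lemma exists_anisotropic_not_orthogonal:
  assumes nd: "nondegenerate_form Q" and "x \<noteq> 0"
  obtains a where "Q a a \<noteq> 0" "Q a x \<noteq> 0"
proof -
  obtain z where z: "Q z x \<noteq> 0"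
    using assms unfolding nondegenerate_form_def by (metis orthogonal_commute)
  consider "Q x x \<noteq> 0" | "Q z z \<noteq> 0" | "Q x x = 0" "Q z z = 0"
    by blast
  then show ?thesis
  proof cases
    case 3
    show ?thesis
    proof (rule that)
      show "Q (z + cnj (Q z x) *s x) (z + cnj (Q z x) *s x) \<noteq> 0"
        using 3 z by (intro isotropic_pair_combination)
      show "Q (z + cnj (Q z x) *s x) x \<noteq> 0"
        using 3 z by (simp add: add_left scale_left)
    qed
  qed (use z that in blast)+
qed

lemma exists_anisotropic_orthogonal:
  assumes nd: "nondegenerate_form Q" and V: "finite V" "card V < CARD('n)"
    and orth: "\<forall>a\<in>V. \<forall>b\<in>V. a \<noteq> b \<longrightarrow> Q a b = 0" and anisotropic: "\<forall>a\<in>V. Q a a \<noteq> 0"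
  obtains w where "Q w w \<noteq> 0" "\<forall>a\<in>V. Q a w = 0"
proof -
  define proj where "proj y = y - (\<Sum>a\<in>V. (Q a y / Q a a) *s a)" for y
  have proj_orth: "Q b (proj y) = 0" if "b \<in> V" for b y
  proof -
    have "(\<Sum>a\<in>V. Q a y / Q a a * Q b a) = (\<Sum>a\<in>V. if a = b then Q b y else 0)"
      using orth anisotropic \<open>b \<in> V\<close> by (intro sum.cong) auto
    with V \<open>b \<in> V\<close> show ?thesis
      by (simp add: proj_def diff_right sum_right scale_right)
  qed
  have "\<not> UNIV \<subseteq> vec.span V"
  proof
    assume "UNIV \<subseteq> vec.span V"
    then have "vec.dim (UNIV :: (complex^'n) set) \<le> card V"
      using vec.span_card_ge_dim[of V UNIV] V by auto
    with V show False
      by (simp add: card_cart_basis)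
  qed
  then obtain y where y: "y \<notin> vec.span V"
    by blast
  define w0 where "w0 = proj y"
  have "(\<Sum>a\<in>V. (Q a y / Q a a) *s a) \<in> vec.span V"
    by (intro vec.span_sum vec.span_scale vec.span_base)
  with y have "w0 \<noteq> 0"
    by (auto simp: w0_def proj_def)
  then obtain z where z: "Q w0 z \<noteq> 0"
    using nd unfolding nondegenerate_form_def by blast
  define w1 where "w1 = proj z"
  have "Q w0 a = 0" if "a \<in> V" for a
    using proj_orth[OF that, of y] orthogonal_commute[of a w0] by (simp add: w0_def)
  then have "Q w0 w1 = Q w0 z"
    by (simp add: w1_def proj_def diff_right sum_right scale_right)
  with z have w01: "Q w0 w1 \<noteq> 0"
    by simp
  have combination_orth: "\<forall>a\<in>V. Q a (w0 + t *s w1) = 0" for t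
    by (simp add: w0_def w1_def proj_orth add_right scale_right)
  consider "Q w0 w0 \<noteq> 0" | "Q w1 w1 \<noteq> 0" | "Q w0 w0 = 0" "Q w1 w1 = 0"
    by blast
  then show ?thesis
  proof cases
    case 1
    then show ?thesis
      by (rule that) (use combination_orth[of 0] in simp)
  next
    case 2
    then show ?thesis
      by (rule that) (use proj_orth in \<open>simp add: w1_def\<close>)
  next
    case 3
    show ?thesis
      by (rule that[OF isotropic_pair_combination[OF 3 w01]]) (use combination_orth in blast)
  qed
qed

lemma exists_orthogonal_anisotropic_pair:
  assumes nd: "nondegenerate_form Q" and dim: "CARD('n) \<ge> 3" and u: "Q u u \<noteq> 0"
  obtains w v where "Q w w \<noteq> 0" "Q v v \<noteq> 0" "Q u w = 0" "Q u v = 0" "Q v w = 0"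
proof -
  obtain w where w: "Q w w \<noteq> 0" "Q u w = 0"
    by (rule exists_anisotropic_orthogonal[OF nd, of "{u}"]) (use dim u in auto)
  have uw: "u \<noteq> w" "Q w u = 0"
    using u w(2) orthogonal_commute by auto
  obtain v where v: "Q v v \<noteq> 0" "Q u v = 0" "Q w v = 0"
    by (rule exists_anisotropic_orthogonal[OF nd, of "{u, w}"]) (use dim u w uw in auto)
  have "Q v w = 0"
    using v(3) orthogonal_commute by blast
  then show ?thesis
    by (rule that[OF w(1) v(1) w(2) v(2)])
qed

lemma exists_shift_anisotropic_not_orthogonal:
  assumes a: "Q a a \<noteq> 0" "Q a x \<noteq> 0"
  obtains n :: nat where "Q (y + of_nat n *s a) (y + of_nat n *s a) \<noteq> 0"
    "Q (y + of_nat n *s a) x \<noteq> 0"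
proof -
  (* for real t both quantities are polynomials in t with leading coefficients Q a a, Q a x *)
  define p where "p = [:Q y y, Q y a + Q a y, Q a a:]"
  define q where "q = [:Q y x, Q a x:]"
  have expand: "Q (y + t *s a) (y + t *s a) = poly p t" "Q (y + t *s a) x = poly q t"
    if "cnj t = t" for t
    using that by (simp_all add: p_def q_def add_left add_right scale_left scale_right algebra_simps)
  have "p * q \<noteq> 0"
    using a by (simp add: p_def q_def)
  then obtain n :: nat where pq: "poly (p * q) (of_nat n) \<noteq> 0"
    by (rule poly_nonzero_at_some_nat)
  have "cnj (of_nat n :: complex) = of_nat n"
    by simp
  with pq have "Q (y + of_nat n *s a) (y + of_nat n *s a) \<noteq> 0" "Q (y + of_nat n *s a) x \<noteq> 0"
    by (simp_all add: expand)
  then show ?thesis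
    by (rule that)
qed

end

locale SU_invariant_subgroup = hermitian_space Q for Q :: "complex^'n \<Rightarrow> complex^'n \<Rightarrow> complex" +
  fixes G :: "(complex^'n) set"
  assumes subgroup: "additive_subgroup G"
    and SU_invariant: "\<forall>A\<in>SU_form Q. \<forall>x\<in>G. A *v x \<in> G"
begin

lemma paired_reflection_displacement:
  assumes "Q u u \<noteq> 0" "Q w w \<noteq> 0" "cmod l = 1" "y \<in> G"
  shows "paired_reflection u w l *v y - y \<in> G"
  using assms SU_invariant paired_reflection_in_SU by (blast intro: additive_subgroup_diff[OF subgroup])

lemma double_displacement:
  assumes anisotropic: "Q u u \<noteq> 0" "Q w w \<noteq> 0" "Q v v \<noteq> 0"
    and orth: "Q u w = 0" "Q u v = 0" "Q v w = 0"
    and x: "x \<in> G" and l: "cmod l = 1" and m: "cmod m = 1"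
  shows "((m - 1) * (l - 1) * (Q u x / Q u u)) *s u \<in> G"
proof -
  define y where "y = paired_reflection u w l *v x - x"
  have y_in: "y \<in> G"
    unfolding y_def using anisotropic(1,2) l x by (rule paired_reflection_displacement)
  have y: "y = ((l - 1) / Q u u * Q u x) *s u + ((cnj l - 1) / Q w w * Q w x) *s w"
    by (simp add: y_def paired_reflection_mult_vec[OF orth(1)])
  have uy: "Q u y = (l - 1) * Q u x" and vy: "Q v y = 0"
    using anisotropic orth orthogonal_commute[of v u] by (simp_all add: y add_right scale_right)
  have "paired_reflection u v m *v y - y
      = ((m - 1) / Q u u * Q u y) *s u + ((cnj m - 1) / Q v v * Q v y) *s v"
    by (simp add: paired_reflection_mult_vec[OF orth(2)])
  also have "\<dots> = ((m - 1) * (l - 1) * (Q u x / Q u u)) *s u"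
    unfolding uy vy by (simp add: vec_eq_iff field_simps)
  finally have "paired_reflection u v m *v y - y = ((m - 1) * (l - 1) * (Q u x / Q u u)) *s u" .
  moreover have "paired_reflection u v m *v y - y \<in> G"
    using anisotropic(1,3) m y_in by (rule paired_reflection_displacement)
  ultimately show ?thesis
    by simp
qed

lemma anisotropic_line_in:
  assumes nd: "nondegenerate_form Q" and dim: "CARD('n) \<ge> 3"
    and x: "x \<in> G" and s: "Q s s \<noteq> 0" "Q s x \<noteq> 0"
  shows "c *s s \<in> G"
proof -
  obtain w v where wv: "Q w w \<noteq> 0" "Q v v \<noteq> 0" "Q s w = 0" "Q s v = 0" "Q v w = 0"
    using exists_orthogonal_anisotropic_pair[OF nd dim s(1)] .
  define p where "p = (Q s x / Q s s) *s s"
  have "((m - 1) * (l - 1)) *s p \<in> G" if "cmod l = 1" "cmod m = 1" for l m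
    using double_displacement[OF s(1) wv x that] by (simp add: p_def)
  then have "(c * Q s s / Q s x) *s p \<in> G"
    by (rule additive_subgroup_line_from_unit_products[OF subgroup])
  with s show ?thesis
    by (simp add: p_def)
qed

end

theorem mainTheorem8:
  fixes Q :: "complex^'n \<Rightarrow> complex^'n \<Rightarrow> complex"
    and G :: "(complex^'n) set"
  assumes "CARD('n) \<ge> 3"
    and "hermitian_form Q"
    and "nondegenerate_form Q"
    and "additive_subgroup G"
    and "\<forall>A\<in>SU_form Q. \<forall>x\<in>G. A *v x \<in> G"
  shows "G = {0} \<or> G = UNIV"
proof -
  interpret SU_invariant_subgroup Q G
    using assms(2,4,5) by unfold_locales
  have "y \<in> G" if x: "x \<in> G" "x \<noteq> 0" for x y
  proof -
    obtain a where a: "Q a a \<noteq> 0" "Q a x \<noteq> 0"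
      using exists_anisotropic_not_orthogonal[OF assms(3) x(2)] .
    obtain n :: nat where n: "Q (y + of_nat n *s a) (y + of_nat n *s a) \<noteq> 0"
      "Q (y + of_nat n *s a) x \<noteq> 0"
      using exists_shift_anisotropic_not_orthogonal[OF a] .
    have "1 *s (y + of_nat n *s a) \<in> G" "of_nat n *s a \<in> G"
      using anisotropic_line_in[OF assms(3,1) x(1)] a n by blast+
    then have "1 *s (y + of_nat n *s a) - of_nat n *s a \<in> G"
      by (rule additive_subgroup_diff[OF assms(4)])
    then show ?thesis
      by simp
  qed
  with assms(4) show ?thesis
    unfolding additive_subgroup_def by blast
qed

end
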